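(* Let $A(x)=\sum_{k=0}^NA_kx^k$ be a $3\times3$ matrix polynomial with $A_N\neq0$, and assume $A_0$ and $A_N$ are invertible. Suppose the system $T_xy=A(x)y$ has spectral type $(3;3;1,1,1,1,1,1,1,1,1)$. Then $N=3$, and there are $a,b\in\mathbb{C}^\times$ and pairwise distinct $c_1,\dots,c_9\in\mathbb{C}^\times$ with $A_0=aI$, $A_3=bI$, $\det A(x)=b^3\prod_{i=1}^9(x+c_i)$ and $b^3\prod_{i=1}^9c_i=a^3$. Moreover, if $\alpha$ satisfies $q^\alpha=a$, the gauge transformation $y=x^\alpha w$ turns the system into $T_xw=a^{-1}A(x)w$, where $a^{-1}A(x)=I+A^{(1)}x+A^{(2)}x^2+\kappa Ix^3$ with $\kappa=b/a$ and $\det(a^{-1}A(x))=\kappa^3\prod_{i=1}^9(x+e_i)$, $e_i=c_i$ pairwise distinct.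
   Context: Fix $q$ with $0<|q|<1$, $T_xf(x)=f(qx)$; $x^\alpha$ satisfies $T_xx^\alpha=q^\alpha x^\alpha$. Spectral type of $T_xy=A(x)y$, $A(x)=\sum_{k=0}^NA_kx^k$ ($M\times M$, $A_N\ne0$): (1) If $A_0\sim\bigoplus_{i=1}^l\bigoplus_{j=1}^{s_i}J(\alpha_i,t_{i,j})$ is the Jordan decomposition ($\alpha_i$ distinct eigenvalues, $J(\alpha,t)$ a Jordan block of size $t$, $t_{i,1}\ge t_{i,2}\ge\cdots$), and $m_i=(m_{i,1},\dots,m_{i,t_{i,1}})$ is the conjugate partition of $(t_{i,1},\dots,t_{i,s_i})$, then $\mathcal{S}_0$ is the list $m_{1,1}\dots m_{1,t_{1,1}},\ \dots,\ m_{l,1}\dots m_{l,t_{l,1}}$; $\mathcal{S}_\infty$ is defined in the same way from $A_N$. (2) Let $a_1,\dots,a_l$ be the distinct zeros of $\det A(x)$, $d_1,\dots,d_M$ the elementary divisors of $A(x)$ (with $d_{k+1}\mid d_k$), $\tilde n^i_k$ the order of vanishing of $d_k$ at $a_i$, and $n^i$ the conjugate partition of $(\tilde n^i_1,\dots,\tilde n^i_M)$; $\mathcal{S}_{\mathrm{div}}$ is the concatenated list of the $n^i$. The spectral type is $(\mathcal{S}_0;\mathcal{S}_\infty;\mathcal{S}_{\mathrm{div}})$. In particular $\mathcal{S}_0=3$ for $M=3$ means $A_0$ is a scalar matrix, and $\mathcal{S}_{\mathrm{div}}=1,1,1,1,1,1,1,1,1$ means $\det A(x)$ has exactly nine distinct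 zeros, each with the corresponding partition $(1)$. *)

theory Defs
  imports "Jordan_Normal_Form.Jordan_Normal_Form_Existence"
          "Jordan_Normal_Form.DL_Submatrix"
          "HOL-Computational_Algebra.Polynomial_Factorial" "HOL-Computational_Algebra.Field_as_Ring"
begin

definition conj_part :: "nat multiset \<Rightarrow> nat list" where
  "conj_part T = map (\<lambda>j. size (filter_mset (\<lambda>t. j \<le> t) T)) [1..<Max (insert 0 (set_mset T)) + 1]"

definition jordan_blocks :: "complex mat \<Rightarrow> (nat \<times> complex) multiset" where
  "jordan_blocks A = mset (SOME n_as. jordan_nf A n_as)"

definition spec_matrix :: "complex mat \<Rightarrow> nat list multiset" where
  "spec_matrix A = (let B = jordan_blocks A in
     image_mset (\<lambda>\<alpha>. conj_part (image_mset fst (filter_mset (\<lambda>p. snd p = \<alpha>) B)))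
                (mset_set (snd ` set_mset B)))"

definition poly_mat :: "nat \<Rightarrow> nat \<Rightarrow> (nat \<Rightarrow> complex mat) \<Rightarrow> complex poly mat" where
  "poly_mat M N A = mat M M (\<lambda>(i,j). \<Sum>k\<le>N. monom (A k $$ (i,j)) k)"

definition eval_mat :: "nat \<Rightarrow> nat \<Rightarrow> (nat \<Rightarrow> complex mat) \<Rightarrow> complex \<Rightarrow> complex mat" where
  "eval_mat M N A x = map_mat (\<lambda>p. poly p x) (poly_mat M N A)"

definition det_div :: "nat \<Rightarrow> complex poly mat \<Rightarrow> nat \<Rightarrow> complex poly" where
  "det_div M P k = Gcd {det (submatrix P I J) | I J.
      I \<subseteq> {..<M} \<and> J \<subseteq> {..<M} \<and> card I = k \<and> card J = k}"

(* elementary divisors d_1,...,d_M with d_{k+1} | d_k  (d_k = D_{M-k+1} / D_{M-k}) *)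
definition elem_div :: "nat \<Rightarrow> complex poly mat \<Rightarrow> nat \<Rightarrow> complex poly" where
  "elem_div M P k = det_div M P (M + 1 - k) div det_div M P (M - k)"

definition spec_div :: "nat \<Rightarrow> complex poly mat \<Rightarrow> nat list multiset" where
  "spec_div M P = image_mset
     (\<lambda>a. conj_part (image_mset (\<lambda>k. order a (elem_div M P k)) (mset [1..<M+1])))
     (mset_set {a. poly (det P) a = 0})"

definition spectral_type ::
  "nat \<Rightarrow> nat \<Rightarrow> (nat \<Rightarrow> complex mat) \<Rightarrow> nat list multiset \<times> nat list multiset \<times> nat list multiset" where
  "spectral_type M N A = (spec_matrix (A 0), spec_matrix (A N), spec_div M (poly_mat M N A))"

end

theory Submission
  imports Defs
begin

text \<open>A matrix whose spectral type is a single partition \<open>[n]\<close> has one eigenvalue and only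
  Jordan blocks of size one, so \<open>A\<^sub>0 = a I\<close> and \<open>A\<^sub>N = b I\<close>. Expanding the determinant by
  Leibniz' formula, \<open>det A(x)\<close> then has degree \<open>3N\<close>, leading coefficient \<open>b\<^sup>3\<close> and constant
  term \<open>a\<^sup>3\<close>. The determinantal divisors form a chain \<open>D\<^sub>0 | D\<^sub>1 | D\<^sub>2 | D\<^sub>3 = det A(x)\<close>, so
  at a zero of \<open>det A(x)\<close> its order is the sum of the orders of the elementary divisors, i.e.
  the size of the corresponding partition in \<open>S\<^sub>d\<^sub>i\<^sub>v\<close>. Nine partitions \<open>(1)\<close> thus mean nine
  simple zeros, whence \<open>3N = 9\<close>; the product of the zeros is read off at \<open>x = 0\<close>. The gauge
  statement is the identity \<open>u(qx) = a u(x)\<close> divided out of the system.\<close>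

section \<open>Matrices of spectral type a single partition\<close>

lemma length_conj_part: "length (conj_part T) = Max (insert 0 (set_mset T))"
  by (simp add: conj_part_def del: upt_Suc)

lemma sum_size_filter_mset_atLeast:
  assumes "\<forall>t\<in>#T. t \<le> m"
  shows "(\<Sum>j=1..m. size (filter_mset (\<lambda>t. j \<le> t) T)) = sum_mset T"
  using assms
proof (induction T)
  case (add t T)
  have "{1..m} \<inter> {j. j \<le> t} = {1..t}" using add.prems by auto
  then have ones: "(\<Sum>j=1..m. if j \<le> t then 1 else 0 :: nat) = t" by (simp add: sum.If_cases)
  have "(\<Sum>j=1..m. size (filter_mset (\<lambda>s. j \<le> s) (add_mset t T)))
      = (\<Sum>j=1..m. (if j \<le> t then 1 else 0) + size (filter_mset (\<lambda>s. j \<le> s) T))"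
    by (rule sum.cong) auto
  then show ?case using add ones by (simp add: sum.distrib)
qed simp

lemma sum_list_conj_part: "sum_list (conj_part T) = sum_mset T"
proof -
  define m where "m = Max (insert 0 (set_mset T))"
  have bound: "\<forall>t\<in>#T. t \<le> m" unfolding m_def by simp
  have "sum_list (conj_part T) = (\<Sum>j\<in>{1..<m+1}. size (filter_mset (\<lambda>t. j \<le> t) T))"
    unfolding conj_part_def m_def[symmetric] interv_sum_list_conv_sum_set_nat set_upt ..
  also have "{1..<m+1} = {1..m}" by auto
  finally show ?thesis using sum_size_filter_mset_atLeast[OF bound] by simp
qed

lemma jordan_matrix_scalar:
  fixes \<alpha> :: "'a :: comm_ring_1"
  assumes "\<forall>p\<in>set n_as. p = (1, \<alpha>)"
  shows "jordan_matrix n_as = \<alpha> \<cdot>\<^sub>m 1\<^sub>m (length n_as)"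
  using assms
proof (induction n_as)
  case Nil
  show ?case by (auto simp: jordan_matrix_def intro!: eq_matI)
next
  case (Cons p ps)
  then have IH: "jordan_matrix ps = \<alpha> \<cdot>\<^sub>m 1\<^sub>m (length ps)" and p: "p = (1, \<alpha>)" by auto
  have dims: "dim_row (diag_block_mat (map (\<lambda>(n, a). jordan_block n a) ps)) = length ps"
    "dim_col (diag_block_mat (map (\<lambda>(n, a). jordan_block n a) ps)) = length ps"
    using arg_cong[OF IH, of dim_row] arg_cong[OF IH, of dim_col] by (auto simp: jordan_matrix_def)
  have "jordan_matrix (p # ps) = four_block_mat (jordan_block 1 \<alpha>) (0\<^sub>m 1 (length ps))
      (0\<^sub>m (length ps) 1) (jordan_matrix ps)"
    using p dims by (simp add: jordan_matrix_def Let_def jordan_block_def)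
  also have "\<dots> = \<alpha> \<cdot>\<^sub>m 1\<^sub>m (length (p # ps))"
    unfolding IH by (rule eq_matI) (auto simp: jordan_block_def)
  finally show ?case .
qed

lemma similar_mat_scalar:
  fixes A :: "'a :: comm_ring_1 mat"
  assumes "similar_mat A (\<alpha> \<cdot>\<^sub>m 1\<^sub>m n)"
  shows "A = \<alpha> \<cdot>\<^sub>m 1\<^sub>m n"
proof -
  obtain P Q where wit: "similar_mat_wit A (\<alpha> \<cdot>\<^sub>m 1\<^sub>m n) P Q"
    using assms unfolding similar_mat_def by blast
  have "n = dim_row A" using carrier_matD(1)[OF similar_mat_witD(5)[OF refl wit]] by simp
  note facts = similar_mat_witD[OF this wit]
  have P: "P \<in> carrier_mat n n" and Q: "Q \<in> carrier_mat n n" and PQ: "P * Q = 1\<^sub>m n"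
    and A: "A = P * (\<alpha> \<cdot>\<^sub>m 1\<^sub>m n) * Q"
    by (fact facts)+
  have "A = (\<alpha> \<cdot>\<^sub>m P) * Q"
    unfolding A mult_smult_distrib[OF P one_carrier_mat] right_mult_one_mat[OF P] ..
  also have "\<dots> = \<alpha> \<cdot>\<^sub>m 1\<^sub>m n"
    unfolding mult_smult_assoc_mat[OF P Q] PQ ..
  finally show ?thesis .
qed

lemma scalar_if_spec_matrix_singleton:
  assumes A: "A \<in> carrier_mat n n" and spec: "spec_matrix A = {#[k]#}"
  shows "\<exists>\<alpha>. A = \<alpha> \<cdot>\<^sub>m 1\<^sub>m n"
proof -
  obtain as where "char_poly A = (\<Prod>a\<leftarrow>as. [:- a, 1:])"
    using char_poly_factorized[OF A] by auto
  then have "\<exists>n_as. jordan_nf A n_as" by (rule jordan_nf_exists[OF A])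
  define n_as where "n_as = (SOME n_as. jordan_nf A n_as)"
  have jnf: "jordan_nf A n_as" unfolding n_as_def by (rule someI_ex) fact
  define sizes where "sizes \<alpha> = image_mset fst (filter_mset (\<lambda>p. snd p = \<alpha>) (mset n_as))" for \<alpha>
  have blocks: "image_mset (\<lambda>\<alpha>. conj_part (sizes \<alpha>)) (mset_set (snd ` set n_as)) = {#[k]#}"
    using spec by (simp add: spec_matrix_def jordan_blocks_def n_as_def sizes_def)
  then have "card (snd ` set n_as) = 1" by (metis size_image_mset size_mset_set size_single)
  then obtain \<alpha> where "snd ` set n_as = {\<alpha>}" by (rule card_1_singletonE)
  then have eigen: "snd p = \<alpha>" if "p \<in> set n_as" for p using that by auto
  then have "filter_mset (\<lambda>p. snd p = \<alpha>) (mset n_as) = mset n_as"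
    by (metis (mono_tags, lifting) filter_True mset_filter)
  then have "conj_part (mset (map fst n_as)) = [k]"
    using blocks \<open>snd ` set n_as = {\<alpha>}\<close> by (simp add: sizes_def)
  then have max_size: "Max (insert 0 (fst ` set n_as)) = 1"
    using length_conj_part[of "mset (map fst n_as)"] by simp
  have "p = (1, \<alpha>)" if p: "p \<in> set n_as" for p
  proof -
    have "fst p \<le> 1" using p max_size Max_ge[of "insert 0 (fst ` set n_as)" "fst p"] by simp
    moreover have "fst p \<noteq> 0" using p jnf by (force simp: jordan_nf_def)
    ultimately show ?thesis using eigen[OF p] by (simp add: prod_eq_iff)
  qed
  then have "jordan_matrix n_as = \<alpha> \<cdot>\<^sub>m 1\<^sub>m (length n_as)"
    by (simp add: jordan_matrix_scalar)
  moreover have "similar_mat A (jordan_matrix n_as)" using jnf by (simp add: jordan_nf_def)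
  ultimately have scalar: "A = \<alpha> \<cdot>\<^sub>m 1\<^sub>m (length n_as)" by (simp add: similar_mat_scalar)
  moreover have "length n_as = n" using A unfolding scalar by auto
  ultimately show ?thesis by blast
qed

section \<open>Extreme coefficients of polynomial determinants\<close>

lemma coeff_mult_degree_le:
  fixes p q :: "'a :: comm_semiring_0 poly"
  assumes "degree p \<le> m" "degree q \<le> n"
  shows "coeff (p * q) (m + n) = coeff p m * coeff q n"
proof (cases "degree p = m \<and> degree q = n")
  case True
  then show ?thesis using coeff_mult_degree_sum by metis
next
  case False
  then have "degree (p * q) < m + n" using assms degree_mult_le[of p q] by linarith
  then have "coeff (p * q) (m + n) = 0" by (simp add: coeff_eq_0)
  moreover have "coeff p m = 0 \<or> coeff q n = 0" using False assms by (auto intro: coeff_eq_0)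
  ultimately show ?thesis by auto
qed

lemma degree_prod_le_card_mult:
  fixes f :: "'b \<Rightarrow> 'a :: comm_semiring_1 poly"
  assumes "finite I" and "\<And>i. i \<in> I \<Longrightarrow> degree (f i) \<le> d"
  shows "degree (\<Prod>i\<in>I. f i) \<le> card I * d"
proof -
  have "degree (\<Prod>i\<in>I. f i) \<le> (\<Sum>i\<in>I. degree (f i))"
    using degree_prod_sum_le[OF assms(1)] by (simp add: o_def)
  also have "\<dots> \<le> card I * d" using sum_bounded_above[of I "\<lambda>i. degree (f i)" d] assms(2) by simp
  finally show ?thesis .
qed

lemma coeff_prod_degree_le:
  fixes f :: "'b \<Rightarrow> 'a :: comm_semiring_1 poly"
  assumes "finite I" and "\<And>i. i \<in> I \<Longrightarrow> degree (f i) \<le> d"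
  shows "coeff (\<Prod>i\<in>I. f i) (card I * d) = (\<Prod>i\<in>I. coeff (f i) d)"
  using assms
proof (induction I rule: finite_induct)
  case (insert i I)
  have "degree (\<Prod>i\<in>I. f i) \<le> card I * d"
    using insert by (intro degree_prod_le_card_mult) auto
  then have "coeff (f i * (\<Prod>i\<in>I. f i)) (d + card I * d) = coeff (f i) d * coeff (\<Prod>i\<in>I. f i) (card I * d)"
    using insert by (intro coeff_mult_degree_le) auto
  then show ?case using insert by simp
qed simp

lemma degree_det_le:
  fixes P :: "'a :: comm_ring_1 poly mat"
  assumes P: "P \<in> carrier_mat n n" and deg: "\<And>i j. i < n \<Longrightarrow> j < n \<Longrightarrow> degree (P $$ (i, j)) \<le> d"
  shows "degree (det P) \<le> n * d"
  unfolding det_def'[OF P]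
proof (intro degree_sum_le)
  fix \<pi> assume "\<pi> \<in> {\<pi>. \<pi> permutes {0..<n}}"
  then have "degree (\<Prod>i = 0..<n. P $$ (i, \<pi> i)) \<le> card {0..<n} * d"
    using deg by (intro degree_prod_le_card_mult) (auto simp: permutes_in_image)
  then show "degree (signof \<pi> * (\<Prod>i = 0..<n. P $$ (i, \<pi> i))) \<le> n * d"
    using degree_mult_le[of "signof \<pi>" "\<Prod>i = 0..<n. P $$ (i, \<pi> i)"] by simp
qed (simp add: finite_permutations)

text \<open>Only the top coefficients of the entries contribute to the coefficient of degree \<open>n * d\<close>
  of each term of the Leibniz expansion.\<close>
lemma coeff_det_degree_le:
  fixes P :: "'a :: comm_ring_1 poly mat"
  assumes P: "P \<in> carrier_mat n n" and deg: "\<And>i j. i < n \<Longrightarrow> j < n \<Longrightarrow> degree (P $$ (i, j)) \<le> d"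
  shows "coeff (det P) (n * d) = det (map_mat (\<lambda>p. coeff p d) P)"
proof -
  have "coeff (\<Prod>i = 0..<n. P $$ (i, \<pi> i)) (n * d) = (\<Prod>i = 0..<n. coeff (P $$ (i, \<pi> i)) d)"
    if "\<pi> permutes {0..<n}" for \<pi>
    using coeff_prod_degree_le[of "{0..<n}" "\<lambda>i. P $$ (i, \<pi> i)" d] deg that
    by (simp add: permutes_in_image)
  then show ?thesis
    unfolding det_def'[OF P] det_def'[OF map_carrier_mat[THEN iffD2, OF P]] coeff_sum
    using P by (intro sum.cong) (auto simp: of_int_poly)
qed

lemma coeff_0_det:
  fixes P :: "'a :: comm_ring_1 poly mat"
  shows "coeff (det P) 0 = det (map_mat (\<lambda>p. coeff p 0) P)"
proof -
  have "comm_ring_hom (\<lambda>p :: 'a poly. poly p 0)" by unfold_locales auto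
  from comm_ring_hom.hom_det[OF this, of P] show ?thesis by (simp add: poly_0_coeff_0)
qed

lemma poly_mat_carrier [simp]: "poly_mat M N A \<in> carrier_mat M M"
  by (simp add: poly_mat_def)

lemma dim_poly_mat [simp]: "dim_row (poly_mat M N A) = M" "dim_col (poly_mat M N A) = M"
  by (simp_all add: poly_mat_def)

lemma coeff_poly_mat:
  "i < M \<Longrightarrow> j < M \<Longrightarrow> coeff (poly_mat M N A $$ (i, j)) k = (if k \<le> N then A k $$ (i, j) else 0)"
  by (simp add: poly_mat_def coeff_sum coeff_monom)

lemma degree_poly_mat_le: "i < M \<Longrightarrow> j < M \<Longrightarrow> degree (poly_mat M N A $$ (i, j)) \<le> N"
  by (rule degree_le) (simp add: coeff_poly_mat)

lemma map_mat_coeff_poly_mat: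
  assumes "k \<le> N" and "A k \<in> carrier_mat M M"
  shows "map_mat (\<lambda>p. coeff p k) (poly_mat M N A) = A k"
  using assms by (intro eq_matI) (auto simp: coeff_poly_mat)

lemma degree_det_poly_mat_le: "degree (det (poly_mat M N A)) \<le> M * N"
  by (intro degree_det_le[OF poly_mat_carrier] degree_poly_mat_le)

lemma coeff_det_poly_mat_top:
  "A N \<in> carrier_mat M M \<Longrightarrow> coeff (det (poly_mat M N A)) (M * N) = det (A N)"
  by (simp add: coeff_det_degree_le[OF poly_mat_carrier degree_poly_mat_le] map_mat_coeff_poly_mat)

lemma coeff_0_det_poly_mat:
  "A 0 \<in> carrier_mat M M \<Longrightarrow> coeff (det (poly_mat M N A)) 0 = det (A 0)"
  by (simp add: coeff_0_det map_mat_coeff_poly_mat)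

lemma det_nonzero_if_invertible_mat:
  fixes A :: "'a :: comm_ring_1 mat"
  assumes A: "A \<in> carrier_mat n n" and "invertible_mat A"
  shows "det A \<noteq> 0"
proof -
  obtain B where "inverts_mat A B" "inverts_mat B A"
    using assms(2) unfolding invertible_mat_def by blast
  then have AB: "A * B = 1\<^sub>m n" and BA: "B * A = 1\<^sub>m (dim_row B)"
    using A unfolding inverts_mat_def by auto
  have "dim_row B = n" using arg_cong[OF BA, of dim_col] A by simp
  moreover have "dim_col B = n" using arg_cong[OF AB, of dim_col] by simp
  ultimately have "B \<in> carrier_mat n n" by blast
  then have "det A * det B = 1" using det_mult[OF A, of B] unfolding AB by simp
  then show ?thesis by (metis mult_zero_left zero_neq_one)
qed

lemma det_poly_mat_scalar_ends:
  assumes "A 0 = a \<cdot>\<^sub>m 1\<^sub>m M" and "A N = b \<cdot>\<^sub>m 1\<^sub>m M" and "b \<noteq> 0"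
  shows "degree (det (poly_mat M N A)) = M * N" "lead_coeff (det (poly_mat M N A)) = b ^ M"
    "poly (det (poly_mat M N A)) 0 = a ^ M"
proof -
  have top: "coeff (det (poly_mat M N A)) (M * N) = b ^ M"
    using coeff_det_poly_mat_top[of A N M] assms(2) by simp
  then have "M * N \<le> degree (det (poly_mat M N A))" using \<open>b \<noteq> 0\<close> by (simp add: le_degree)
  then show deg: "degree (det (poly_mat M N A)) = M * N"
    using degree_det_poly_mat_le[of M N A] by simp
  show "lead_coeff (det (poly_mat M N A)) = b ^ M" using top by (simp add: deg)
  show "poly (det (poly_mat M N A)) 0 = a ^ M"
    using coeff_0_det_poly_mat[of A M N] assms(1) by (simp add: poly_0_coeff_0)
qed

section \<open>Determinantal and elementary divisors\<close>

lemma card_Collect_less_mem: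
  assumes "I \<subseteq> {..<n}"
  shows "card {i. i < n \<and> i \<in> I} = card I"
proof -
  have "{i. i < n \<and> i \<in> I} = I" using assms by auto
  then show ?thesis by simp
qed

lemma card_submatrix_rows_cols:
  assumes "P \<in> carrier_mat n n" "I \<subseteq> {..<n}" "J \<subseteq> {..<n}"
  shows "card {i. i < dim_row P \<and> i \<in> I} = card I" "card {j. j < dim_col P \<and> j \<in> J} = card J"
proof -
  have "dim_row P = n" "dim_col P = n" using assms(1) by auto
  then show "card {i. i < dim_row P \<and> i \<in> I} = card I" "card {j. j < dim_col P \<and> j \<in> J} = card J"
    using card_Collect_less_mem[OF assms(2)] card_Collect_less_mem[OF assms(3)] by simp_all
qed

lemma submatrix_carrier:
  assumes "P \<in> carrier_mat n n" "I \<subseteq> {..<n}" "J \<subseteq> {..<n}"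
  shows "submatrix P I J \<in> carrier_mat (card I) (card J)"
  using card_submatrix_rows_cols[OF assms] by (intro carrier_matI) (simp_all only: dim_submatrix)

lemma submatrix_index_carrier:
  assumes "P \<in> carrier_mat n n" "I \<subseteq> {..<n}" "J \<subseteq> {..<n}" "i < card I" "j < card J"
  shows "submatrix P I J $$ (i, j) = P $$ (pick I i, pick J j)"
  using card_submatrix_rows_cols[OF assms(1-3)] assms(4,5) by (intro submatrix_index) simp_all

lemma submatrix_all:
  assumes "P \<in> carrier_mat n n"
  shows "submatrix P {..<n} {..<n} = P"
proof -
  have "pick {..<n} k = k" if "k < n" for k
  proof -
    have "{a \<in> {..<n}. a < k} = {..<k}" using that by auto
    then show ?thesis using pick_card_in_set[of k "{..<n}"] that by simp
  qed
  moreover have "submatrix P {..<n} {..<n} $$ (i, j) = P $$ (pick {..<n} i, pick {..<n} j)"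
    if "i < n" "j < n" for i j
    using that by (intro submatrix_index_carrier[OF assms]) auto
  ultimately show ?thesis
    using submatrix_carrier[OF assms, of "{..<n}" "{..<n}"] assms by (intro eq_matI) auto
qed

lemma pick_Diff_singleton:
  assumes "k < n - 1" "j < n"
  shows "pick ({..<n} - {j}) k = (if k < j then k else Suc k)"
proof -
  let ?x = "if k < j then k else Suc k"
  have mem: "?x \<in> {..<n} - {j}" using assms by auto
  have "{a \<in> {..<n} - {j}. a < ?x} = (if k < j then {..<k} else {..<Suc k} - {j})"
    using assms by auto
  then have "card {a \<in> {..<n} - {j}. a < ?x} = k" using assms by auto
  then show ?thesis using pick_card_in_set[OF mem] by simp
qed

lemma mat_delete_eq_submatrix:
  assumes P: "P \<in> carrier_mat n n" and "i < n" "j < n"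
  shows "mat_delete P i j = submatrix P ({..<n} - {i}) ({..<n} - {j})"
proof -
  have dims: "submatrix P ({..<n} - {i}) ({..<n} - {j}) \<in> carrier_mat (n - 1) (n - 1)"
    using submatrix_carrier[OF P, of "{..<n} - {i}" "{..<n} - {j}"] assms by auto
  have "submatrix P ({..<n} - {i}) ({..<n} - {j}) $$ (a, b)
      = P $$ (if a < i then a else Suc a, if b < j then b else Suc b)"
    if "a < n - 1" "b < n - 1" for a b
    using that assms
    by (simp add: submatrix_index_carrier[OF P, of "{..<n} - {i}" "{..<n} - {j}"] pick_Diff_singleton)
  then show ?thesis
    using P dims assms by (intro eq_matI) (auto simp: mat_delete_def)
qed

lemma det_div_0: "det_div n P 0 = 1"
proof -
  have "{det (submatrix P I J) | I J. I \<subseteq> {..<n} \<and> J \<subseteq> {..<n} \<and> card I = 0 \<and> card J = 0}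
      = {det (submatrix P {} {})}"
    using finite_subset[of _ "{..<n}"] by fastforce
  moreover have "det (submatrix P {} {}) = 1" by (rule det_dim_zero) (simp add: submatrix_def)
  ultimately show ?thesis by (simp add: det_div_def)
qed

lemma det_div_top:
  assumes P: "P \<in> carrier_mat n n"
  shows "det_div n P n = normalize (det P)"
proof -
  have full: "I = {..<n}" if "I \<subseteq> {..<n}" "card I = n" for I
    using card_subset_eq[OF finite_lessThan that(1)] that(2) by simp
  have "{det (submatrix P I J) | I J. I \<subseteq> {..<n} \<and> J \<subseteq> {..<n} \<and> card I = n \<and> card J = n}
      = {det (submatrix P {..<n} {..<n})}" (is "?minors = _")
  proof (intro equalityI subsetI)
    fix x assume "x \<in> ?minors"
    then obtain I J where "x = det (submatrix P I J)" and "I = {..<n}" "J = {..<n}"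
      using full by blast
    then show "x \<in> {det (submatrix P {..<n} {..<n})}" by simp
  qed (auto intro!: exI[of _ "{..<n}"])
  then show ?thesis by (simp add: det_div_def submatrix_all[OF P])
qed

lemma det_div_1_dvd_entry:
  assumes P: "P \<in> carrier_mat n n" and "i < n" "j < n"
  shows "det_div n P 1 dvd P $$ (i, j)"
proof -
  have "submatrix P {i} {j} \<in> carrier_mat 1 1"
    using submatrix_carrier[OF P, of "{i}" "{j}"] assms by simp
  moreover have "pick {x} 0 = x" for x :: nat by (auto intro: Least_equality)
  ultimately have "det (submatrix P {i} {j}) = P $$ (i, j)"
    using assms by (simp add: det_single submatrix_index_carrier)
  moreover have "det_div n P 1 dvd det (submatrix P {i} {j})"
    unfolding det_div_def using assms
    by (intro Gcd_dvd CollectI exI[of _ "{i}"] exI[of _ "{j}"]) simp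
  ultimately show ?thesis by simp
qed

lemma dvd_det_if_dvd_entries:
  fixes M :: "'a :: comm_ring_1 mat"
  assumes M: "M \<in> carrier_mat n n" and "0 < n" and "\<And>i j. i < n \<Longrightarrow> j < n \<Longrightarrow> x dvd M $$ (i, j)"
  shows "x dvd det M"
  unfolding laplace_expansion_row[OF M \<open>0 < n\<close>] using assms by (intro dvd_sum dvd_mult2) auto

lemma det_div_1_dvd_det_div_2:
  assumes P: "P \<in> carrier_mat n n"
  shows "det_div n P 1 dvd det_div n P 2"
  unfolding det_div_def[of n P 2]
proof (rule Gcd_greatest, clarify)
  fix I J assume I: "I \<subseteq> {..<n}" and J: "J \<subseteq> {..<n}" and "card I = 2" "card J = 2"
  then have sub: "submatrix P I J \<in> carrier_mat 2 2" using submatrix_carrier[OF P I J] by simp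
  show "det_div n P 1 dvd det (submatrix P I J)"
  proof (rule dvd_det_if_dvd_entries[OF sub])
    fix a b :: nat assume "a < 2" "b < 2"
    then have "pick I a \<in> I" "pick J b \<in> J" using \<open>card I = 2\<close> \<open>card J = 2\<close> by (auto intro: pick_in_set)
    moreover have "submatrix P I J $$ (a, b) = P $$ (pick I a, pick J b)"
      using \<open>a < 2\<close> \<open>b < 2\<close> \<open>card I = 2\<close> \<open>card J = 2\<close> by (simp add: submatrix_index_carrier[OF P I J])
    ultimately show "det_div n P 1 dvd submatrix P I J $$ (a, b)"
      using det_div_1_dvd_entry[OF P] I J by auto
  qed simp
qed

lemma det_div_pred_dvd_det:
  assumes P: "P \<in> carrier_mat n n" and "0 < n"
  shows "det_div n P (n - 1) dvd det P"
proof -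
  have "det_div n P (n - 1) dvd det (mat_delete P 0 j)" if "j < n" for j
    unfolding mat_delete_eq_submatrix[OF P \<open>0 < n\<close> that] det_div_def
    using that \<open>0 < n\<close> by (intro Gcd_dvd CollectI exI[of _ "{..<n} - {0}"] exI[of _ "{..<n} - {j}"]) auto
  then show ?thesis
    unfolding laplace_expansion_row[OF P \<open>0 < n\<close>] cofactor_def by (intro dvd_sum dvd_mult) auto
qed

lemma order_div_eq_diff:
  fixes p q :: "'a :: idom_divide poly"
  assumes "q dvd p" "p \<noteq> 0"
  shows "order r (p div q) = order r p - order r q"
  using order_mult[of q "p div q" r] assms by simp

lemma order_normalize:
  fixes p :: "'a :: {idom_divide, semidom_divide_unit_factor} poly"
  assumes "p \<noteq> 0"
  shows "order z (normalize p) = order z p"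
  using dvd_imp_order_le[of p "normalize p" z] dvd_imp_order_le[of "normalize p" p z] assms by simp

text \<open>The elementary divisors are the successive quotients of the chain
  \<open>D\<^sub>0 | D\<^sub>1 | D\<^sub>2 | D\<^sub>3\<close> of determinantal divisors, so their orders telescope.\<close>
lemma order_det_eq_sum_order_elem_div:
  assumes P: "P \<in> carrier_mat 3 3" and "det P \<noteq> 0"
  shows "order z (det P) = sum_mset (image_mset (\<lambda>k. order z (elem_div 3 P k)) (mset [1..<3+1]))"
proof -
  define D where "D k = det_div 3 P k" for k
  have D3: "D 3 = normalize (det P)" unfolding D_def by (rule det_div_top[OF P])
  have "D 1 dvd D 2" unfolding D_def by (rule det_div_1_dvd_det_div_2[OF P])
  moreover have "D 2 dvd D 3" using det_div_pred_dvd_det[OF P] D3 by (simp add: D_def)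
  moreover have "D 3 \<noteq> 0" using D3 \<open>det P \<noteq> 0\<close> by simp
  moreover have "D 2 \<noteq> 0" using calculation by auto
  ultimately have "order z (D 3 div D 2) + order z (D 2 div D 1) + order z (D 1) = order z (D 3)"
    using dvd_imp_order_le[of "D 3" "D 2" z] dvd_imp_order_le[of "D 2" "D 1" z]
      order_div_eq_diff[of "D 2" "D 3" z] order_div_eq_diff[of "D 1" "D 2" z]
    by linarith
  moreover have "order z (D 3) = order z (det P)"
    unfolding D3 using \<open>det P \<noteq> 0\<close> by (rule order_normalize)
  moreover have "mset [1..<3+1] = {#1::nat, 2, 3#}" by (simp add: numeral_3_eq_3)
  ultimately show ?thesis by (simp add: elem_div_def D_def det_div_0)
qed

section \<open>Simple zeros of the determinant\<close>

lemma size_spec_div: "size (spec_div M P) = card {z. poly (det P) z = 0}"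
  by (simp add: spec_div_def)

lemma rsquarefree_det_if_spec_div_simple:
  assumes P: "P \<in> carrier_mat 3 3" and "det P \<noteq> 0" and simple: "\<forall>s\<in>#spec_div 3 P. s = [1]"
  shows "rsquarefree (det P)"
  unfolding rsquarefree_def
proof (intro conjI allI)
  fix z
  show "order z (det P) = 0 \<or> order z (det P) = 1"
  proof (cases "poly (det P) z = 0")
    case True
    let ?orders = "image_mset (\<lambda>k. order z (elem_div 3 P k)) (mset [1..<3+1])"
    have "finite {z. poly (det P) z = 0}" using \<open>det P \<noteq> 0\<close> by (rule poly_roots_finite)
    then have "conj_part ?orders \<in># spec_div 3 P" using True by (simp add: spec_div_def)
    then have "conj_part ?orders = [1]" using simple by blast
    then have "sum_mset ?orders = 1" using sum_list_conj_part[of ?orders] by simp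
    then show ?thesis
      unfolding order_det_eq_sum_order_elem_div[OF P \<open>det P \<noteq> 0\<close>] by simp
  qed (simp add: order_root)
qed fact

lemma degree_eq_card_roots_if_rsquarefree:
  fixes p :: "complex poly"
  assumes "rsquarefree p"
  shows "degree p = card {z. poly p z = 0}"
proof -
  have "p \<noteq> 0" using assms by (simp add: rsquarefree_def)
  then have "lead_coeff p \<noteq> 0" by simp
  then have "degree p = degree (\<Prod>z | poly p z = 0. [:-z, 1:])"
    using arg_cong[OF complex_poly_decompose_rsquarefree[OF assms], of degree] by simp
  also have "\<dots> = card {z. poly p z = 0}"
    by (simp add: degree_prod_sum_eq)
  finally show ?thesis .
qed

lemma prod_linear_factors_enumerate:
  fixes S :: "complex set"
  assumes "finite S" "0 \<notin> S"
  obtains c where "inj_on c {1..card S}" "\<forall>i\<in>{1..card S}. c i \<noteq> 0"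
    "(\<Prod>z\<in>S. [:-z, 1:]) = (\<Prod>i=1..card S. [:c i, 1:])"
proof -
  from ex_bij_betw_nat_finite_1[OF assms(1)] obtain f where f: "bij_betw f {1..card S} S" ..
  show ?thesis
  proof (rule that)
    show "inj_on (\<lambda>i. - f i) {1..card S}"
    proof (rule inj_onI)
      fix i j assume "i \<in> {1..card S}" "j \<in> {1..card S}" "- f i = - f j"
      then show "i = j" using bij_betw_imp_inj_on[OF f] by (simp add: inj_on_eq_iff)
    qed
    show "\<forall>i\<in>{1..card S}. - f i \<noteq> 0"
    proof
      fix i assume "i \<in> {1..card S}"
      then have "f i \<in> S" using bij_betwE[OF f] by blast
      then show "- f i \<noteq> 0" using assms(2) by auto
    qed
    show "(\<Prod>z\<in>S. [:-z, 1:]) = (\<Prod>i=1..card S. [:- f i, 1:])"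
      using prod.reindex_bij_betw[OF f, of "\<lambda>z. [:-z, 1:]"] by simp
  qed
qed

lemma spectral_type_scalar_ends_simple_det:
  assumes carr: "\<forall>k\<le>N. A k \<in> carrier_mat 3 3"
    and inv0: "invertible_mat (A 0)" and invN: "invertible_mat (A N)"
    and stype: "spectral_type 3 N A = ({#[3]#}, {#[3]#}, replicate_mset 9 [1])"
  obtains a b :: complex and c :: "nat \<Rightarrow> complex" where "N = 3" "a \<noteq> 0" "b \<noteq> 0" "inj_on c {1..9}" "\<forall>i\<in>{1..9}. c i \<noteq> 0"
    "A 0 = a \<cdot>\<^sub>m 1\<^sub>m 3" "A N = b \<cdot>\<^sub>m 1\<^sub>m 3"
    "det (poly_mat 3 N A) = Polynomial.smult (b ^ 3) (\<Prod>i=1..9. [:c i, 1:])"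
    "b ^ 3 * (\<Prod>i=1..9. c i) = a ^ 3"
proof -
  let ?D = "det (poly_mat 3 N A)"
  define S where "S = {z. poly ?D z = 0}"
  have A0: "A 0 \<in> carrier_mat 3 3" and AN: "A N \<in> carrier_mat 3 3" using carr by auto
  have spec: "spec_matrix (A 0) = {#[3]#}" "spec_matrix (A N) = {#[3]#}"
    "spec_div 3 (poly_mat 3 N A) = replicate_mset 9 [1]"
    using stype by (simp_all add: spectral_type_def)
  obtain a where a: "A 0 = a \<cdot>\<^sub>m 1\<^sub>m 3" using scalar_if_spec_matrix_singleton[OF A0 spec(1)] ..
  obtain b where b: "A N = b \<cdot>\<^sub>m 1\<^sub>m 3" using scalar_if_spec_matrix_singleton[OF AN spec(2)] ..
  have "a \<noteq> 0" using det_nonzero_if_invertible_mat[OF A0 inv0] by (simp add: a)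
  have "b \<noteq> 0" using det_nonzero_if_invertible_mat[OF AN invN] by (simp add: b)
  note D = det_poly_mat_scalar_ends[OF a b \<open>b \<noteq> 0\<close>]
  have "?D \<noteq> 0" using D(2) \<open>b \<noteq> 0\<close> by auto
  have sqfree: "rsquarefree ?D"
    using rsquarefree_det_if_spec_div_simple[OF poly_mat_carrier \<open>?D \<noteq> 0\<close>] spec(3) by simp
  have "card S = 9" using size_spec_div[of 3 "poly_mat 3 N A"] spec(3) by (simp add: S_def)
  then have "N = 3" using degree_eq_card_roots_if_rsquarefree[OF sqfree] D(1) by (simp add: S_def)
  have "finite S" using \<open>card S = 9\<close> by (intro card_ge_0_finite) simp
  moreover have "0 \<notin> S" using D(3) \<open>a \<noteq> 0\<close> by (simp add: S_def)
  ultimately obtain c :: "nat \<Rightarrow> complex" where c: "inj_on c {1..9}" "\<forall>i\<in>{1..9}. c i \<noteq> 0"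
    and prod_c: "(\<Prod>z\<in>S. [:-z, 1:]) = (\<Prod>i=1..9. [:c i, 1:])"
    by (rule prod_linear_factors_enumerate[of S, unfolded \<open>card S = 9\<close>])
  have det_c: "?D = Polynomial.smult (b ^ 3) (\<Prod>i=1..9. [:c i, 1:])"
    using complex_poly_decompose_rsquarefree[OF sqfree] D(2) prod_c by (simp add: S_def)
  moreover have "b ^ 3 * (\<Prod>i=1..9. c i) = a ^ 3"
    using arg_cong[OF det_c, of "\<lambda>p. poly p 0"] D(3) by (simp add: poly_prod)
  ultimately show ?thesis using that \<open>N = 3\<close> \<open>a \<noteq> 0\<close> \<open>b \<noteq> 0\<close> c a b by blast
qed

section \<open>Gauge transformation and normal form\<close>

lemma smult_mat_mult_mat_vec:
  fixes A :: "'a :: comm_ring mat"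
  assumes "A \<in> carrier_mat n n" "v \<in> carrier_vec n"
  shows "(k \<cdot>\<^sub>m A) *\<^sub>v v = k \<cdot>\<^sub>v (A *\<^sub>v v)"
  by (rule eq_vecI) (use assms in \<open>auto simp: scalar_prod_def sum_distrib_left algebra_simps\<close>)

lemma smult_vec_eq_iff:
  fixes v w :: "'a :: field vec"
  assumes "k \<noteq> 0"
  shows "k \<cdot>\<^sub>v v = w \<longleftrightarrow> v = (1 / k) \<cdot>\<^sub>v w"
  using assms by (auto simp: smult_smult_assoc)

text \<open>Substituting \<open>y = u w\<close> with \<open>u(q x) = a u(x)\<close> (e.g. \<open>u = x\<^sup>\<alpha>\<close> with \<open>q\<^sup>\<alpha> = a\<close>) divides the
  coefficient matrix of \<open>T\<^sub>x y = E(x) y\<close> by \<open>a\<close>.\<close>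
lemma gauge_transform_iff:
  fixes E :: "complex \<Rightarrow> complex mat" and u :: "complex \<Rightarrow> complex"
  assumes E: "\<And>x. E x \<in> carrier_mat n n" and w: "\<And>x. w x \<in> carrier_vec n" and "a \<noteq> 0"
    and u: "\<forall>x. x \<noteq> 0 \<longrightarrow> u x \<noteq> 0 \<and> u (q * x) = a * u x"
  shows "(\<forall>x. x \<noteq> 0 \<longrightarrow> u (q * x) \<cdot>\<^sub>v w (q * x) = E x *\<^sub>v (u x \<cdot>\<^sub>v w x))
     \<longleftrightarrow> (\<forall>x. x \<noteq> 0 \<longrightarrow> w (q * x) = ((1 / a) \<cdot>\<^sub>m E x) *\<^sub>v w x)"
proof -
  have "u (q * x) \<cdot>\<^sub>v w (q * x) = E x *\<^sub>v (u x \<cdot>\<^sub>v w x)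
      \<longleftrightarrow> w (q * x) = ((1 / a) \<cdot>\<^sub>m E x) *\<^sub>v w x" if "x \<noteq> 0" for x
  proof -
    have "u (q * x) \<cdot>\<^sub>v w (q * x) = E x *\<^sub>v (u x \<cdot>\<^sub>v w x)
        \<longleftrightarrow> w (q * x) = (1 / (a * u x)) \<cdot>\<^sub>v (u x \<cdot>\<^sub>v (E x *\<^sub>v w x))"
      using u that \<open>a \<noteq> 0\<close> by (simp add: mult_mat_vec[OF E w] smult_vec_eq_iff)
    also have "(1 / (a * u x)) \<cdot>\<^sub>v (u x \<cdot>\<^sub>v (E x *\<^sub>v w x)) = ((1 / a) \<cdot>\<^sub>m E x) *\<^sub>v w x"
      using u that by (simp add: smult_smult_assoc smult_mat_mult_mat_vec[OF E w])
    finally show ?thesis .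
  qed
  then show ?thesis by blast
qed

lemma dim_eval_mat [simp]: "dim_row (eval_mat M N A x) = M" "dim_col (eval_mat M N A x) = M"
  by (simp_all add: eval_mat_def)

lemma eval_mat_carrier: "eval_mat M N A x \<in> carrier_mat M M"
  by (rule carrier_matI) simp_all

lemma eval_mat_index:
  assumes "i < M" "j < M"
  shows "eval_mat M N A x $$ (i, j) = (\<Sum>k\<le>N. A k $$ (i, j) * x ^ k)"
proof -
  have "eval_mat M N A x $$ (i, j) = poly (\<Sum>k\<le>N. monom (A k $$ (i, j)) k) x"
    using assms unfolding eval_mat_def poly_mat_def by simp
  also have "\<dots> = (\<Sum>k\<le>N. A k $$ (i, j) * x ^ k)"
    by (simp add: poly_sum poly_monom)
  finally show ?thesis .
qed

lemma eval_mat_cubic_normalized: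
  assumes carr: "\<forall>k\<le>3. A k \<in> carrier_mat M M"
    and A0: "A 0 = a \<cdot>\<^sub>m 1\<^sub>m M" and A3: "A 3 = b \<cdot>\<^sub>m 1\<^sub>m M" and "a \<noteq> 0"
  shows "(1 / a) \<cdot>\<^sub>m eval_mat M 3 A x =
    1\<^sub>m M + x \<cdot>\<^sub>m ((1 / a) \<cdot>\<^sub>m A 1) + x ^ 2 \<cdot>\<^sub>m ((1 / a) \<cdot>\<^sub>m A 2) + (b / a * x ^ 3) \<cdot>\<^sub>m 1\<^sub>m M"
    (is "_ = ?rhs")
proof (rule eq_matI)
  have A12: "A 1 \<in> carrier_mat M M" "A 2 \<in> carrier_mat M M" using carr by auto
  fix i j assume "i < dim_row ?rhs" "j < dim_col ?rhs"
  then have ij: "i < M" "j < M" by auto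
  have "eval_mat M 3 A x $$ (i, j) = (\<Sum>k\<le>3. A k $$ (i, j) * x ^ k)"
    using ij by (rule eval_mat_index)
  also have "\<dots> = A 0 $$ (i, j) + A 1 $$ (i, j) * x + A 2 $$ (i, j) * x ^ 2 + A 3 $$ (i, j) * x ^ 3"
    by (simp add: numeral_3_eq_3 atMost_Suc numeral_2_eq_2 power2_eq_square)
  finally have lhs: "((1 / a) \<cdot>\<^sub>m eval_mat M 3 A x) $$ (i, j) = (1 / a) *
      ((if i = j then a else 0) + A 1 $$ (i, j) * x + A 2 $$ (i, j) * x ^ 2 + (if i = j then b else 0) * x ^ 3)"
    using ij by (simp add: A0 A3)
  have rhs: "?rhs $$ (i, j) = (if i = j then 1 else 0) + x * ((1 / a) * A 1 $$ (i, j))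
      + x ^ 2 * ((1 / a) * A 2 $$ (i, j)) + (b / a * x ^ 3) * (if i = j then 1 else 0)"
    using ij A12 by simp
  show "((1 / a) \<cdot>\<^sub>m eval_mat M 3 A x) $$ (i, j) = ?rhs $$ (i, j)"
    unfolding lhs rhs using \<open>a \<noteq> 0\<close> by (cases "i = j") (simp_all add: field_simps)
qed (use carr in auto)

lemma det_map_mat_smult:
  fixes P :: "'a :: comm_ring_1 poly mat"
  assumes "P \<in> carrier_mat n n"
  shows "det (map_mat (Polynomial.smult c) P) = Polynomial.smult (c ^ n) (det P)"
proof -
  have "map_mat (Polynomial.smult c) P = [:c:] \<cdot>\<^sub>m P" by (rule eq_matI) (use assms in auto)
  then show ?thesis using assms by (simp add: poly_const_pow)
qed

theorem mainTheorem4: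
  fixes q :: complex and A :: "nat \<Rightarrow> complex mat" and N :: nat
  assumes q: "0 < cmod q" "cmod q < 1"
    and carr: "\<forall>k\<le>N. A k \<in> carrier_mat 3 3"
    and lead: "A N \<noteq> 0\<^sub>m 3 3"
    and inv0: "invertible_mat (A 0)" and invN: "invertible_mat (A N)"
    and stype: "spectral_type 3 N A = ({#[3]#}, {#[3]#}, replicate_mset 9 [1])"
  shows "N = 3 \<and>
    (\<exists>a b :: complex. \<exists>c :: nat \<Rightarrow> complex.
       a \<noteq> 0 \<and> b \<noteq> 0 \<and> inj_on c {1..9} \<and> (\<forall>i\<in>{1..9}. c i \<noteq> 0) \<and>
       A 0 = a \<cdot>\<^sub>m 1\<^sub>m 3 \<and> A 3 = b \<cdot>\<^sub>m 1\<^sub>m 3 \<and>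
       det (poly_mat 3 N A) = Polynomial.smult (b ^ 3) (\<Prod>i=1..9. [:c i, 1:]) \<and>
       b ^ 3 * (\<Prod>i=1..9. c i) = a ^ 3 \<and>
       (\<forall>u :: complex \<Rightarrow> complex. (\<forall>x. x \<noteq> 0 \<longrightarrow> u x \<noteq> 0 \<and> u (q * x) = a * u x) \<longrightarrow>
          (\<forall>w :: complex \<Rightarrow> complex vec. (\<forall>x. w x \<in> carrier_vec 3) \<longrightarrow>
             ((\<forall>x. x \<noteq> 0 \<longrightarrow> u (q * x) \<cdot>\<^sub>v w (q * x) = eval_mat 3 N A x *\<^sub>v (u x \<cdot>\<^sub>v w x))
              \<longleftrightarrow> (\<forall>x. x \<noteq> 0 \<longrightarrow> w (q * x) = ((1 / a) \<cdot>\<^sub>m eval_mat 3 N A x) *\<^sub>v w x)))) \<and>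
       (let \<kappa> = b / a in
          (\<exists>A1 A2. A1 \<in> carrier_mat 3 3 \<and> A2 \<in> carrier_mat 3 3 \<and>
             (\<forall>x. (1 / a) \<cdot>\<^sub>m eval_mat 3 N A x =
                   1\<^sub>m 3 + x \<cdot>\<^sub>m A1 + x ^ 2 \<cdot>\<^sub>m A2 + (\<kappa> * x ^ 3) \<cdot>\<^sub>m 1\<^sub>m 3)) \<and>
          det (map_mat (Polynomial.smult (1 / a)) (poly_mat 3 N A)) =
             Polynomial.smult (\<kappa> ^ 3) (\<Prod>i=1..9. [:c i, 1:])))"
proof -
  obtain a b :: complex and c :: "nat \<Rightarrow> complex" where "N = 3" "a \<noteq> 0" "b \<noteq> 0"
    and c: "inj_on c {1..9}" "\<forall>i\<in>{1..9}. c i \<noteq> 0"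
    and A0: "A 0 = a \<cdot>\<^sub>m 1\<^sub>m 3" and AN: "A N = b \<cdot>\<^sub>m 1\<^sub>m 3"
    and det: "det (poly_mat 3 N A) = Polynomial.smult (b ^ 3) (\<Prod>i=1..9. [:c i, 1:])"
    and det_0: "b ^ 3 * (\<Prod>i=1..9. c i) = a ^ 3"
    by (rule spectral_type_scalar_ends_simple_det[OF carr inv0 invN stype])
  have gauge: "\<forall>u. (\<forall>x. x \<noteq> 0 \<longrightarrow> u x \<noteq> 0 \<and> u (q * x) = a * u x) \<longrightarrow>
      (\<forall>w. (\<forall>x. w x \<in> carrier_vec 3) \<longrightarrow>
        ((\<forall>x. x \<noteq> 0 \<longrightarrow> u (q * x) \<cdot>\<^sub>v w (q * x) = eval_mat 3 N A x *\<^sub>v (u x \<cdot>\<^sub>v w x))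
         \<longleftrightarrow> (\<forall>x. x \<noteq> 0 \<longrightarrow> w (q * x) = ((1 / a) \<cdot>\<^sub>m eval_mat 3 N A x) *\<^sub>v w x)))"
    by (intro allI impI gauge_transform_iff[OF eval_mat_carrier]) (use \<open>a \<noteq> 0\<close> in auto)
  have normal_form: "\<exists>A1 A2. A1 \<in> carrier_mat 3 3 \<and> A2 \<in> carrier_mat 3 3 \<and>
      (\<forall>x. (1 / a) \<cdot>\<^sub>m eval_mat 3 N A x = 1\<^sub>m 3 + x \<cdot>\<^sub>m A1 + x ^ 2 \<cdot>\<^sub>m A2 + (b / a * x ^ 3) \<cdot>\<^sub>m 1\<^sub>m 3)"
    using eval_mat_cubic_normalized[of A 3 a b] carr A0 AN \<open>N = 3\<close> \<open>a \<noteq> 0\<close>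
    by (intro exI[of _ "(1 / a) \<cdot>\<^sub>m A 1"] exI[of _ "(1 / a) \<cdot>\<^sub>m A 2"]) auto
  have det_scaled: "det (map_mat (Polynomial.smult (1 / a)) (poly_mat 3 N A))
      = Polynomial.smult ((b / a) ^ 3) (\<Prod>i=1..9. [:c i, 1:])"
    unfolding det_map_mat_smult[OF poly_mat_carrier] det by (simp add: power_divide)
  show ?thesis
    unfolding Let_def
    by (intro conjI exI[of _ a] exI[of _ b] exI[of _ c] \<open>N = 3\<close> \<open>a \<noteq> 0\<close> \<open>b \<noteq> 0\<close> c A0
        AN[unfolded \<open>N = 3\<close>] det det_0 gauge normal_form det_scaled)
qed

end
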